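(* Consider the extreme Kerr case $Q=0$, $M=|a|>0$. If for some half-integer $k$ there is an energy eigenvalue $\omega\in\mathbb{R}$ (a bound state of a Dirac particle of rest mass $m>0$), then $Mm>\frac14$.
   Context: Fix real numbers $M>0$, $a$, $Q$ with $M^2=a^2+Q^2$ and put $\rho:=M$. Fix the rest mass $m>0$ and charge $e\in\mathbb{R}$ of a Dirac particle and a half-integer $k\in\{\pm\frac12,\pm\frac32,\dots\}$. For $\omega,\lambda\in\mathbb{R}$ consider the radial system for $f:(\rho,\infty)\to\mathbb{C}^2$, $$\begin{pmatrix}(r-\rho)\frac{d}{dr}+\frac{iV(r)}{r-\rho} & imr-\lambda\\ -imr-\lambda & (r-\rho)\frac{d}{dr}-\frac{iV(r)}{r-\rho}\end{pmatrix}f(r)=0,\qquad V(r):=\omega(r^2+a^2)+ka+eQr,$$ and the angular system for $g:(0,\pi)\to\mathbb{C}^2$, $$\begin{pmatrix}\frac{d}{d\theta}+\frac{\cot\theta}{2}-W(\theta) & -am\cos\theta+\lambda\\ am\cos\theta+\lambda & -\frac{d}{d\theta}-\frac{\cot\theta}{2}-W(\theta)\end{pmatrix}g(\theta)=0,\qquad W(\theta):=a\omega\sin\theta+\frac{k}{\sin\theta}.$$ A number $\omega\in\mathbb{R}$ is called an energy eigenvalue (for azimuthal quantum number $k$) if there exist $\lambda\in\mathbb{R}$ and nontrivial solutions $f$ of the radial system and $g$ of the angular system with $$\int_\rho^\infty|f(r)|^2\frac{r^2+a^2}{(r-\rho)^2}\,dr<\infty,\qquad\int_0^\pi|g(\theta)|^2\sin\theta\,d\theta<\infty.$$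 *)

theory Defs
  imports "HOL-Analysis.Analysis"
begin

definition half_integer :: "real \<Rightarrow> bool" where
  "half_integer k \<longleftrightarrow> (\<exists>n::int. k = real_of_int n + 1/2)"

definition Vpot :: "real \<Rightarrow> real \<Rightarrow> real \<Rightarrow> real \<Rightarrow> real \<Rightarrow> real \<Rightarrow> real" where
  "Vpot a Q e k \<omega> r = \<omega> * (r^2 + a^2) + k * a + e * Q * r"

definition Wpot :: "real \<Rightarrow> real \<Rightarrow> real \<Rightarrow> real \<Rightarrow> real" where
  "Wpot a k \<omega> \<theta> = a * \<omega> * sin \<theta> + k / sin \<theta>"

definition radial_solution ::
  "real \<Rightarrow> real \<Rightarrow> real \<Rightarrow> real \<Rightarrow> real \<Rightarrow> real \<Rightarrow> real \<Rightarrow> real \<Rightarrow>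
   (real \<Rightarrow> complex) \<Rightarrow> (real \<Rightarrow> complex) \<Rightarrow> bool" where
  "radial_solution M a Q m e k \<omega> lam f1 f2 \<longleftrightarrow>
     (\<forall>r\<in>{M<..}. \<exists>d1 d2.
        (f1 has_vector_derivative d1) (at r) \<and> (f2 has_vector_derivative d2) (at r) \<and>
        complex_of_real (r - M) * d1
          + \<i> * complex_of_real (Vpot a Q e k \<omega> r / (r - M)) * f1 r
          + (\<i> * complex_of_real (m * r) - complex_of_real lam) * f2 r = 0 \<and>
        (- \<i> * complex_of_real (m * r) - complex_of_real lam) * f1 r
          + complex_of_real (r - M) * d2
          - \<i> * complex_of_real (Vpot a Q e k \<omega> r / (r - M)) * f2 r = 0)"

definition angular_solution ::
  "real \<Rightarrow> real \<Rightarrow> real \<Rightarrow> real \<Rightarrow> real \<Rightarrow>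
   (real \<Rightarrow> complex) \<Rightarrow> (real \<Rightarrow> complex) \<Rightarrow> bool" where
  "angular_solution a m k \<omega> lam g1 g2 \<longleftrightarrow>
     (\<forall>\<theta>\<in>{0<..<pi}. \<exists>d1 d2.
        (g1 has_vector_derivative d1) (at \<theta>) \<and> (g2 has_vector_derivative d2) (at \<theta>) \<and>
        d1 + complex_of_real (cot \<theta> / 2) * g1 \<theta> - complex_of_real (Wpot a k \<omega> \<theta>) * g1 \<theta>
          + complex_of_real (- a * m * cos \<theta> + lam) * g2 \<theta> = 0 \<and>
        complex_of_real (a * m * cos \<theta> + lam) * g1 \<theta>
          - d2 - complex_of_real (cot \<theta> / 2) * g2 \<theta> - complex_of_real (Wpot a k \<omega> \<theta>) * g2 \<theta> = 0)"

definition energy_eigenvalue ::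
  "real \<Rightarrow> real \<Rightarrow> real \<Rightarrow> real \<Rightarrow> real \<Rightarrow> real \<Rightarrow> real \<Rightarrow> bool" where
  "energy_eigenvalue M a Q m e k \<omega> \<longleftrightarrow>
     (\<exists>lam::real. \<exists>f1 f2 g1 g2.
        radial_solution M a Q m e k \<omega> lam f1 f2 \<and>
        (\<exists>r\<in>{M<..}. f1 r \<noteq> 0 \<or> f2 r \<noteq> 0) \<and>
        (\<lambda>r. (cmod (f1 r)^2 + cmod (f2 r)^2) * (r^2 + a^2) / (r - M)^2) integrable_on {M<..} \<and>
        angular_solution a m k \<omega> lam g1 g2 \<and>
        (\<exists>\<theta>\<in>{0<..<pi}. g1 \<theta> \<noteq> 0 \<or> g2 \<theta> \<noteq> 0) \<and>
        (\<lambda>\<theta>. (cmod (g1 \<theta>)^2 + cmod (g2 \<theta>)^2) * sin \<theta>) integrable_on {0<..<pi})"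

end

theory Submission
  imports Defs "HOL-Real_Asymp.Real_Asymp"
begin

(*
  The radial equations for (f1, f2) give a closed real linear system for the bilinears
  x + i y = conj f1 * f2 and P = |f1|^2 + |f2|^2, which satisfy x^2 + y^2 <= P^2 / 4 and
  P' = 4 (m r y + lam x) / (r - M); hence P vanishes nowhere on (M, oo) for a nontrivial solution.
  In the extreme case the horizon is at rho = M and the coefficient V / (r - M) is singular there
  unless V(M) = 0.

  If V(M) /= 0, adding 2 (r - M) / V * (m r x - lam y) to P removes the singular part of P', so this
  gauge has bounded logarithmic derivative near M; hence P is bounded below near the horizon and
  the weight (r^2 + a^2) / (r - M)^2 makes the norm diverge there.

  If V(M) = 0, then omega (2 M^2) = - k a, so |omega| = |k| / (2 M) >= 1 / (4 M), and M m <= 1/4 would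
  give |omega| >= m. In that regime a second gauge, B (P - Lam) + Lam with
  Lam = 2 (m r x - lam y) / sqrt (m^2 r^2 + lam^2), is nondecreasing for large r and bounded by
  2 B P with B = O(r), so P >= c / r and the norm diverges logarithmically at infinity.
*)

section \<open>Differential inequalities and divergent integrals\<close>

lemma DERIV_abs_le_mult_imp_exp_bounds:
  fixes g g' :: "real \<Rightarrow> real"
  assumes "a \<le> b"
    and deriv: "\<And>t. a \<le> t \<Longrightarrow> t \<le> b \<Longrightarrow> (g has_real_derivative g' t) (at t)"
    and bound: "\<And>t. a \<le> t \<Longrightarrow> t \<le> b \<Longrightarrow> \<bar>g' t\<bar> \<le> C * g t"
  shows "g a * exp (- C * (b - a)) \<le> g b" and "g b * exp (- C * (b - a)) \<le> g a"
proof -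
  have "g a * exp (C * a) \<le> g b * exp (C * b)"
  proof (rule DERIV_nonneg_imp_nondecreasing[OF \<open>a \<le> b\<close>])
    fix t assume t: "a \<le> t" "t \<le> b"
    have "((\<lambda>t. g t * exp (C * t)) has_real_derivative (g' t + C * g t) * exp (C * t)) (at t)"
      by (auto intro!: derivative_eq_intros deriv t simp: algebra_simps)
    moreover have "0 \<le> g' t + C * g t" using bound[OF t] by linarith
    ultimately show "\<exists>y. ((\<lambda>t. g t * exp (C * t)) has_real_derivative y) (at t) \<and> 0 \<le> y"
      by (metis exp_ge_zero mult_nonneg_nonneg)
  qed
  then have "g a * exp (C * a) * exp (- C * b) \<le> g b * exp (C * b) * exp (- C * b)"
    by (simp add: mult_right_mono)
  then show "g a * exp (- C * (b - a)) \<le> g b"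
    by (simp add: mult.assoc right_diff_distrib flip: exp_add)
  have "g b * exp (- C * b) \<le> g a * exp (- C * a)"
  proof (rule DERIV_nonpos_imp_nonincreasing[OF \<open>a \<le> b\<close>])
    fix t assume t: "a \<le> t" "t \<le> b"
    have "((\<lambda>t. g t * exp (- C * t)) has_real_derivative (g' t - C * g t) * exp (- C * t)) (at t)"
      by (auto intro!: derivative_eq_intros deriv t simp: algebra_simps)
    moreover have "g' t - C * g t \<le> 0" using bound[OF t] by linarith
    ultimately show "\<exists>y. ((\<lambda>t. g t * exp (- C * t)) has_real_derivative y) (at t) \<and> y \<le> 0"
      by (metis exp_ge_zero mult_nonpos_nonneg)
  qed
  then have "g b * exp (- C * b) * exp (C * a) \<le> g a * exp (- C * a) * exp (C * a)"
    by (simp add: mult_right_mono)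
  then show "g b * exp (- C * (b - a)) \<le> g a"
    by (simp add: mult.assoc right_diff_distrib flip: exp_add)
qed

lemma eventually_ge_const_at_right_of_log_deriv_bounded:
  fixes G G' :: "real \<Rightarrow> real"
  assumes "\<forall>\<^sub>F t in at_right a. (G has_real_derivative G' t) (at t) \<and> \<bar>G' t\<bar> \<le> C * G t \<and> 0 < G t"
  shows "\<exists>c>0. \<forall>\<^sub>F t in at_right a. c \<le> G t"
proof -
  obtain b where "a < b"
    and near: "\<And>t. a < t \<Longrightarrow> t < b \<Longrightarrow>
      (G has_real_derivative G' t) (at t) \<and> \<bar>G' t\<bar> \<le> C * G t \<and> 0 < G t"
    using assms unfolding eventually_at_right_field by blast
  define \<beta> where "\<beta> = (a + b) / 2"
  have \<beta>: "a < \<beta>" "\<beta> < b" using \<open>a < b\<close> unfolding \<beta>_def by auto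
  have "0 \<le> C * G \<beta>" using near[OF \<beta>] by (meson abs_ge_zero order_trans)
  then have "0 \<le> C" using near[OF \<beta>] by (simp add: zero_le_mult_iff)
  define c where "c = G \<beta> * exp (- C * (\<beta> - a))"
  have "c \<le> G t" if "a < t" "t < \<beta>" for t
  proof -
    have "G \<beta> * exp (- C * (\<beta> - t)) \<le> G t"
      using that \<beta> near by (intro DERIV_abs_le_mult_imp_exp_bounds(2)[where g' = G']) auto
    moreover have "c \<le> G \<beta> * exp (- C * (\<beta> - t))"
      unfolding c_def using that \<open>0 \<le> C\<close> near[OF \<beta>]
      by (intro mult_left_mono) (auto intro: mult_left_mono)
    ultimately show ?thesis by linarith
  qed
  moreover have "0 < c" unfolding c_def using near[OF \<beta>] by simp
  ultimately show ?thesis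
    using \<beta>(1) unfolding eventually_at_right_field by blast
qed

lemma has_integral_le_integral_greaterThan:
  fixes F g :: "real \<Rightarrow> real"
  assumes "F integrable_on {a<..}" "continuous_on {a<..} F" "\<And>t. a < t \<Longrightarrow> 0 \<le> F t"
    and "a < \<alpha>" "(g has_integral J) {\<alpha>..\<beta>}" "\<And>t. \<alpha> \<le> t \<Longrightarrow> t \<le> \<beta> \<Longrightarrow> g t \<le> F t"
  shows "J \<le> integral {a<..} F"
proof -
  have sub: "{\<alpha>..\<beta>} \<subseteq> {a<..}" using \<open>a < \<alpha>\<close> by auto
  then have "F integrable_on {\<alpha>..\<beta>}"
    using assms(2) by (meson continuous_on_subset integrable_continuous_interval)
  then have "J \<le> integral {\<alpha>..\<beta>} F"
    using assms(5,6) by (intro has_integral_le[OF assms(5)]) auto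
  also have "\<dots> \<le> integral {a<..} F"
    using sub assms(1,3) \<open>F integrable_on {\<alpha>..\<beta>}\<close> by (intro integral_subset_le) auto
  finally show ?thesis .
qed

lemma not_integrable_greaterThan_of_ge_inverse_square_at_right:
  fixes F :: "real \<Rightarrow> real"
  assumes "continuous_on {a<..} F" "\<And>t. a < t \<Longrightarrow> 0 \<le> F t"
    and "0 < c" and "\<forall>\<^sub>F t in at_right a. c / (t - a)\<^sup>2 \<le> F t"
  shows "\<not> F integrable_on {a<..}"
proof
  assume int: "F integrable_on {a<..}"
  obtain b where "a < b" and near: "\<And>t. a < t \<Longrightarrow> t < b \<Longrightarrow> c / (t - a)\<^sup>2 \<le> F t"
    using assms(4) unfolding eventually_at_right_field by blast
  define \<beta> where "\<beta> = (a + b) / 2"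
  define I where "I = integral {a<..} F"
  define \<alpha> where "\<alpha> = a + c / (\<bar>I\<bar> + 1 + c / (\<beta> - a))"
  have "a < \<beta>" "\<beta> < b" using \<open>a < b\<close> unfolding \<beta>_def by auto
  have pos: "0 < \<bar>I\<bar> + 1 + c / (\<beta> - a)" using \<open>0 < c\<close> \<open>a < \<beta>\<close> by (simp add: add_pos_nonneg)
  have "a < \<alpha>" unfolding \<alpha>_def using pos \<open>0 < c\<close> by simp
  have "\<alpha> < \<beta>"
  proof -
    have "c / (\<bar>I\<bar> + 1 + c / (\<beta> - a)) < c / (c / (\<beta> - a))"
      using pos \<open>0 < c\<close> \<open>a < \<beta>\<close> by (intro divide_strict_left_mono) auto
    then show ?thesis unfolding \<alpha>_def using \<open>0 < c\<close> by simp
  qed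
  have "((\<lambda>t. c / (t - a)\<^sup>2) has_integral (c / (\<alpha> - a) - c / (\<beta> - a))) {\<alpha>..\<beta>}"
  proof -
    have "((\<lambda>t. - c / (t - a)) has_real_derivative c / (t - a)\<^sup>2) (at t within {\<alpha>..\<beta>})"
      if "t \<in> {\<alpha>..\<beta>}" for t
      using that \<open>a < \<alpha>\<close> by (auto intro!: derivative_eq_intros simp: power2_eq_square field_simps)
    then show ?thesis
      using fundamental_theorem_of_calculus[of \<alpha> \<beta> "\<lambda>t. - c / (t - a)"] \<open>\<alpha> < \<beta>\<close>
      by (simp add: has_real_derivative_iff_has_vector_derivative)
  qed
  moreover have "c / (\<alpha> - a) - c / (\<beta> - a) = \<bar>I\<bar> + 1"
    unfolding \<alpha>_def using pos \<open>0 < c\<close> by simp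
  ultimately have "\<bar>I\<bar> + 1 \<le> I"
    unfolding I_def using int assms(1,2) \<open>a < \<alpha>\<close> \<open>\<beta> < b\<close> near
    by (intro has_integral_le_integral_greaterThan[where g = "\<lambda>t. c / (t - a)\<^sup>2"]) auto
  then show False by linarith
qed

lemma not_integrable_greaterThan_of_ge_inverse_at_top:
  fixes F :: "real \<Rightarrow> real"
  assumes "continuous_on {a<..} F" "\<And>t. a < t \<Longrightarrow> 0 \<le> F t"
    and "0 < c" and "\<forall>\<^sub>F t in at_top. c / t \<le> F t"
  shows "\<not> F integrable_on {a<..}"
proof
  assume int: "F integrable_on {a<..}"
  have "\<forall>\<^sub>F t in at_top. c / t \<le> F t \<and> max a 0 < t"
    using assms(4) eventually_gt_at_top by (rule eventually_conj)
  then obtain R where R: "\<And>t. R \<le> t \<Longrightarrow> c / t \<le> F t \<and> max a 0 < t"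
    unfolding eventually_at_top_linorder by blast
  define I where "I = integral {a<..} F"
  define T where "T = R * exp ((\<bar>I\<bar> + 1) / c)"
  have "0 < R" "a < R" using R[of R] by auto
  have "R \<le> T" unfolding T_def using \<open>0 < R\<close> \<open>0 < c\<close> by simp
  have "((\<lambda>t. c / t) has_integral (c * ln T - c * ln R)) {R..T}"
  proof -
    have "((\<lambda>t. c * ln t) has_real_derivative c / t) (at t within {R..T})" if "t \<in> {R..T}" for t
      using that \<open>0 < R\<close> by (auto intro!: derivative_eq_intros)
    then show ?thesis
      using fundamental_theorem_of_calculus[of R T "\<lambda>t. c * ln t"] \<open>R \<le> T\<close>
      by (simp add: has_real_derivative_iff_has_vector_derivative)
  qed
  moreover have "c * ln T - c * ln R = \<bar>I\<bar> + 1"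
    unfolding T_def using \<open>0 < R\<close> \<open>0 < c\<close> by (simp add: ln_mult field_simps)
  ultimately have "\<bar>I\<bar> + 1 \<le> I"
    unfolding I_def using int assms(1,2) \<open>a < R\<close> R
    by (intro has_integral_le_integral_greaterThan[where g = "\<lambda>t. c / t"]) auto
  then show False by linarith
qed

section \<open>The bilinear system of the radial equation\<close>

text \<open>For a solution (f1, f2) of the radial system, x + i y = cnj f1 * f2, P = |f1|^2 + |f2|^2,
  rho = M and U = V / (r - M) (see radial_solution_bilinear_system); the cone condition is AM-GM.\<close>

locale radial_bilinear_system =
  fixes m lam rho :: real and U x y P :: "real \<Rightarrow> real"
  assumes mass_pos: "0 < m" and rho_pos: "0 < rho"
    and x_deriv: "\<And>t. rho < t \<Longrightarrow>
      (x has_real_derivative (- 2 * U t * y t + lam * P t) / (t - rho)) (at t)"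
    and y_deriv: "\<And>t. rho < t \<Longrightarrow>
      (y has_real_derivative (2 * U t * x t + m * t * P t) / (t - rho)) (at t)"
    and P_deriv: "\<And>t. rho < t \<Longrightarrow>
      (P has_real_derivative 4 * (m * t * y t + lam * x t) / (t - rho)) (at t)"
    and cone: "\<And>t. (x t)\<^sup>2 + (y t)\<^sup>2 \<le> (P t)\<^sup>2 / 4"
    and P_nonneg: "\<And>t. 0 \<le> P t"
begin

lemma abs_lincomb_le_sqrt: "\<bar>\<alpha> * x t + \<beta> * y t\<bar> \<le> sqrt (\<alpha>\<^sup>2 + \<beta>\<^sup>2) * (P t / 2)"
proof -
  have "(\<alpha> * x t + \<beta> * y t)\<^sup>2 + (\<alpha> * y t - \<beta> * x t)\<^sup>2 = (\<alpha>\<^sup>2 + \<beta>\<^sup>2) * ((x t)\<^sup>2 + (y t)\<^sup>2)"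
    by (simp add: power2_eq_square algebra_simps)
  then have "(\<alpha> * x t + \<beta> * y t)\<^sup>2 \<le> (\<alpha>\<^sup>2 + \<beta>\<^sup>2) * ((x t)\<^sup>2 + (y t)\<^sup>2)"
    by (metis le_add_same_cancel1 zero_le_power2)
  also have "\<dots> \<le> (\<alpha>\<^sup>2 + \<beta>\<^sup>2) * (P t / 2)\<^sup>2"
    using cone[of t] by (intro mult_left_mono) (auto simp: power_divide)
  finally have "sqrt ((\<alpha> * x t + \<beta> * y t)\<^sup>2) \<le> sqrt ((\<alpha>\<^sup>2 + \<beta>\<^sup>2) * (P t / 2)\<^sup>2)"
    by (rule real_sqrt_le_mono)
  then show ?thesis using P_nonneg[of t] by (simp add: real_sqrt_mult)
qed

lemma abs_lincomb_le: "\<bar>\<alpha> * x t + \<beta> * y t\<bar> \<le> (\<bar>\<alpha>\<bar> + \<bar>\<beta>\<bar>) * (P t / 2)"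
  using abs_lincomb_le_sqrt[of \<alpha> t \<beta>] sqrt_sum_squares_le_sum_abs[of \<alpha> \<beta>] P_nonneg[of t]
  by (meson divide_nonneg_pos mult_right_mono order_trans zero_less_numeral)

lemma abs_P_deriv_le:
  assumes "rho < t"
  shows "\<bar>4 * (m * t * y t + lam * x t) / (t - rho)\<bar> \<le> 2 * (m * t + \<bar>lam\<bar>) / (t - rho) * P t"
proof -
  define K where "K = m * t * y t + lam * x t"
  have "\<bar>K\<bar> \<le> (m * t + \<bar>lam\<bar>) * (P t / 2)"
    unfolding K_def using abs_lincomb_le[of lam t "m * t"] assms mass_pos rho_pos
    by (simp add: abs_mult add.commute)
  then have "4 * \<bar>K\<bar> / (t - rho) \<le> 4 * ((m * t + \<bar>lam\<bar>) * (P t / 2)) / (t - rho)"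
    using assms by (intro divide_right_mono mult_left_mono) auto
  then have "\<bar>4 * K / (t - rho)\<bar> \<le> 4 * ((m * t + \<bar>lam\<bar>) * (P t / 2)) / (t - rho)"
    using assms by (simp add: abs_divide abs_mult)
  also have "\<dots> = 2 * (m * t + \<bar>lam\<bar>) / (t - rho) * P t"
    using assms by (simp add: field_simps)
  finally show ?thesis unfolding K_def .
qed

lemma P_pos:
  assumes "rho < r0" "0 < P r0" "rho < t"
  shows "0 < P t"
proof -
  define a b where "a = min t r0" and "b = max t r0"
  define C where "C = 2 * (m * b + \<bar>lam\<bar>) / (a - rho)"
  have "a \<le> b" "rho < a" using assms unfolding a_def b_def by auto
  have bound: "\<bar>4 * (m * s * y s + lam * x s) / (s - rho)\<bar> \<le> C * P s" if "a \<le> s" "s \<le> b" for s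
  proof -
    have "rho < s" using that \<open>rho < a\<close> by linarith
    have "2 * (m * s + \<bar>lam\<bar>) / (s - rho) \<le> C"
      unfolding C_def using that \<open>rho < a\<close> mass_pos rho_pos
      by (intro frac_le add_mono mult_left_mono) auto
    then show ?thesis
      using abs_P_deriv_le[OF \<open>rho < s\<close>] P_nonneg[of s] by (meson mult_right_mono order_trans)
  qed
  have deriv: "(P has_real_derivative 4 * (m * s * y s + lam * x s) / (s - rho)) (at s)"
    if "a \<le> s" for s
    using P_deriv that \<open>rho < a\<close> by simp
  show ?thesis
    using DERIV_abs_le_mult_imp_exp_bounds[OF \<open>a \<le> b\<close> deriv bound]
    using assms(2) unfolding a_def b_def
    by (cases "t \<le> r0") (auto intro: less_le_trans[rotated] simp: max_def min_def)
qed

lemma reflection: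
  "radial_bilinear_system m (- lam) rho (\<lambda>t. - U t) (\<lambda>t. - x t) y P"
proof unfold_locales
  fix t assume "rho < t"
  show "((\<lambda>t. - x t) has_real_derivative (- 2 * - U t * y t + - lam * P t) / (t - rho)) (at t)"
    using DERIV_minus[OF x_deriv[OF \<open>rho < t\<close>]] by (simp add: minus_divide_left)
  show "(y has_real_derivative (2 * - U t * - x t + m * t * P t) / (t - rho)) (at t)"
    using y_deriv[OF \<open>rho < t\<close>] by simp
  show "(P has_real_derivative 4 * (m * t * y t + - lam * - x t) / (t - rho)) (at t)"
    using P_deriv[OF \<open>rho < t\<close>] by simp
qed (use mass_pos rho_pos cone P_nonneg in auto)

lemma weighted_P_continuous: "continuous_on {rho<..} (\<lambda>t. P t * (t\<^sup>2 + a\<^sup>2) / (t - rho)\<^sup>2)"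
proof (intro continuous_at_imp_continuous_on ballI)
  fix t :: real assume "t \<in> {rho<..}"
  then show "isCont (\<lambda>t. P t * (t\<^sup>2 + a\<^sup>2) / (t - rho)\<^sup>2) t"
    using DERIV_isCont[OF P_deriv] by (auto intro!: continuous_intros)
qed

end

lemma radial_solution_derivatives:
  assumes "radial_solution M a Q m e k \<omega> lam f1 f2" and "M < r"
  defines "D \<equiv> complex_of_real (r - M)" and "U \<equiv> complex_of_real (Vpot a Q e k \<omega> r / (r - M))"
  obtains d1 d2 where "(f1 has_vector_derivative d1) (at r)" "(f2 has_vector_derivative d2) (at r)"
    "D * d1 = - \<i> * U * f1 r - (\<i> * of_real (m * r) - of_real lam) * f2 r"
    "D * d2 = (\<i> * of_real (m * r) + of_real lam) * f1 r + \<i> * U * f2 r"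
proof -
  obtain d1 d2 where d: "(f1 has_vector_derivative d1) (at r)" "(f2 has_vector_derivative d2) (at r)"
    and e1: "D * d1 + \<i> * U * f1 r + (\<i> * of_real (m * r) - of_real lam) * f2 r = 0"
    and e2: "(- \<i> * of_real (m * r) - of_real lam) * f1 r + D * d2 - \<i> * U * f2 r = 0"
    using assms(1,2) unfolding radial_solution_def D_def U_def by fastforce
  have "D * d1 = - \<i> * U * f1 r - (\<i> * of_real (m * r) - of_real lam) * f2 r"
    using e1 by algebra
  moreover have "D * d2 = (\<i> * of_real (m * r) + of_real lam) * f1 r + \<i> * U * f2 r"
    using e2 by algebra
  ultimately show thesis using that d by blast
qed

lemma radial_solution_bilinear_derivs:
  assumes "radial_solution M a Q m e k \<omega> lam f1 f2" and "M < r"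
  defines "U \<equiv> Vpot a Q e k \<omega> r / (r - M)" and "z \<equiv> cnj (f1 r) * f2 r"
  obtains Z W where
    "((\<lambda>r. cnj (f1 r) * f2 r) has_vector_derivative Z) (at r)"
    "of_real (r - M) * Z = 2 * \<i> * of_real U * z
       + (\<i> * of_real (m * r) + of_real lam) * of_real ((cmod (f1 r))\<^sup>2 + (cmod (f2 r))\<^sup>2)"
    "((\<lambda>r. cnj (f1 r) * f1 r + cnj (f2 r) * f2 r) has_vector_derivative W) (at r)"
    "of_real (r - M) * W = 2 * (\<i> * of_real (m * r) + of_real lam) * cnj z
       + 2 * (of_real lam - \<i> * of_real (m * r)) * z"
proof -
  define D where "D = complex_of_real (r - M)"
  obtain d1 d2 where d: "(f1 has_vector_derivative d1) (at r)" "(f2 has_vector_derivative d2) (at r)"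
    and d1: "D * d1 = - \<i> * of_real U * f1 r - (\<i> * of_real (m * r) - of_real lam) * f2 r"
    and d2: "D * d2 = (\<i> * of_real (m * r) + of_real lam) * f1 r + \<i> * of_real U * f2 r"
    using radial_solution_derivatives[OF assms(1,2)] unfolding D_def U_def by blast
  have "cnj D = D" unfolding D_def by simp
  from arg_cong[OF d1, of cnj] arg_cong[OF d2, of cnj]
  have cd1: "D * cnj d1 = \<i> * of_real U * cnj (f1 r) + (\<i> * of_real (m * r) + of_real lam) * cnj (f2 r)"
    and cd2: "D * cnj d2 = (of_real lam - \<i> * of_real (m * r)) * cnj (f1 r) - \<i> * of_real U * cnj (f2 r)"
    using \<open>cnj D = D\<close> by (simp_all add: algebra_simps)
  have n1: "of_real ((cmod (f1 r))\<^sup>2) = f1 r * cnj (f1 r)" and n2: "of_real ((cmod (f2 r))\<^sup>2) = f2 r * cnj (f2 r)"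
    by (simp_all only: complex_norm_square)
  show thesis
  proof
    show "((\<lambda>r. cnj (f1 r) * f2 r) has_vector_derivative cnj (f1 r) * d2 + cnj d1 * f2 r) (at r)"
      by (auto intro!: derivative_eq_intros d)
    show "of_real (r - M) * (cnj (f1 r) * d2 + cnj d1 * f2 r) = 2 * \<i> * of_real U * z
       + (\<i> * of_real (m * r) + of_real lam) * of_real ((cmod (f1 r))\<^sup>2 + (cmod (f2 r))\<^sup>2)"
      unfolding z_def of_real_add n1 n2 D_def[symmetric] using cd1 d2 by algebra
    show "((\<lambda>r. cnj (f1 r) * f1 r + cnj (f2 r) * f2 r) has_vector_derivative
      cnj (f1 r) * d1 + cnj d1 * f1 r + (cnj (f2 r) * d2 + cnj d2 * f2 r)) (at r)"
      by (auto intro!: derivative_eq_intros d)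
    show "of_real (r - M) * (cnj (f1 r) * d1 + cnj d1 * f1 r + (cnj (f2 r) * d2 + cnj d2 * f2 r))
      = 2 * (\<i> * of_real (m * r) + of_real lam) * cnj z + 2 * (of_real lam - \<i> * of_real (m * r)) * z"
      unfolding z_def D_def[symmetric] complex_cnj_mult complex_cnj_cnj using d1 cd1 d2 cd2 by algebra
  qed
qed

lemma cnj_mult_Re_Im_le:
  fixes u v :: complex
  shows "(Re (cnj u * v))\<^sup>2 + (Im (cnj u * v))\<^sup>2 \<le> ((cmod u)\<^sup>2 + (cmod v)\<^sup>2)\<^sup>2 / 4"
proof -
  have "(Re (cnj u * v))\<^sup>2 + (Im (cnj u * v))\<^sup>2 = (cmod u)\<^sup>2 * (cmod v)\<^sup>2"
    by (simp only: cmod_power2[symmetric] norm_mult complex_mod_cnj power_mult_distrib)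
  also have "\<dots> \<le> ((cmod u)\<^sup>2 + (cmod v)\<^sup>2)\<^sup>2 / 4"
    using zero_le_power2[of "(cmod u)\<^sup>2 - (cmod v)\<^sup>2"] by (simp add: power2_eq_square algebra_simps)
  finally show ?thesis .
qed

lemma radial_solution_bilinear_system:
  assumes rs: "radial_solution M a Q m e k \<omega> lam f1 f2" and "0 < M" "0 < m"
  shows "radial_bilinear_system m lam M (\<lambda>r. Vpot a Q e k \<omega> r / (r - M))
    (\<lambda>r. Re (cnj (f1 r) * f2 r)) (\<lambda>r. Im (cnj (f1 r) * f2 r))
    (\<lambda>r. (cmod (f1 r))\<^sup>2 + (cmod (f2 r))\<^sup>2)"
proof
  fix r assume "M < r"
  define U z P where "U = Vpot a Q e k \<omega> r / (r - M)" and "z = cnj (f1 r) * f2 r"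
    and "P = (cmod (f1 r))\<^sup>2 + (cmod (f2 r))\<^sup>2"
  obtain Z W where Z: "((\<lambda>r. cnj (f1 r) * f2 r) has_vector_derivative Z) (at r)"
      "of_real (r - M) * Z = 2 * \<i> * of_real U * z + (\<i> * of_real (m * r) + of_real lam) * of_real P"
    and W: "((\<lambda>r. cnj (f1 r) * f1 r + cnj (f2 r) * f2 r) has_vector_derivative W) (at r)"
      "of_real (r - M) * W = 2 * (\<i> * of_real (m * r) + of_real lam) * cnj z
         + 2 * (of_real lam - \<i> * of_real (m * r)) * z"
    using radial_solution_bilinear_derivs[OF rs \<open>M < r\<close>] unfolding U_def z_def P_def by blast
  have "0 < r - M" using \<open>M < r\<close> by simp
  have "(r - M) * Re Z = - 2 * U * Im z + lam * P" "(r - M) * Im Z = 2 * U * Re z + m * r * P"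
    using arg_cong[OF Z(2), of Re] arg_cong[OF Z(2), of Im] by simp_all
  then have ReZ: "(- 2 * U * Im z + lam * P) / (r - M) = Re Z"
    and ImZ: "(2 * U * Re z + m * r * P) / (r - M) = Im Z"
    using \<open>0 < r - M\<close> by (simp_all add: field_simps)
  show "((\<lambda>r. Re (cnj (f1 r) * f2 r)) has_real_derivative (- 2 * U * Im z + lam * P) / (r - M)) (at r)"
    unfolding ReZ by (rule has_field_derivative_Re[OF Z(1)])
  show "((\<lambda>r. Im (cnj (f1 r) * f2 r)) has_real_derivative (2 * U * Re z + m * r * P) / (r - M)) (at r)"
    unfolding ImZ by (rule has_field_derivative_Im[OF Z(1)])
  have "(r - M) * Re W = 4 * (m * r * Im z + lam * Re z)"
    using arg_cong[OF W(2), of Re] by (simp add: algebra_simps)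
  then have ReW: "4 * (m * r * Im z + lam * Re z) / (r - M) = Re W"
    using \<open>0 < r - M\<close> by (simp add: field_simps)
  have "(\<lambda>r. (cmod (f1 r))\<^sup>2 + (cmod (f2 r))\<^sup>2) = (\<lambda>r. Re (cnj (f1 r) * f1 r + cnj (f2 r) * f2 r))"
    by (simp add: cmod_power2 flip: power2_eq_square)
  then show "((\<lambda>r. (cmod (f1 r))\<^sup>2 + (cmod (f2 r))\<^sup>2) has_real_derivative
      4 * (m * r * Im z + lam * Re z) / (r - M)) (at r)"
    unfolding ReW using has_field_derivative_Re[OF W(1)] by simp
qed (use assms cnj_mult_Re_Im_le in auto)

section \<open>Lower bound near the horizon\<close>

lemma horizon_eventually_small:
  fixes V V' :: "real \<Rightarrow> real"
  assumes V_deriv: "\<And>t. (V has_real_derivative V' t) (at t)" and "isCont V' rho" "V rho \<noteq> 0"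
  shows "\<forall>\<^sub>F t in at_right rho. rho < t \<and> t < rho + 1 \<and> V t \<noteq> 0 \<and> \<bar>2 * (t - rho) / V t\<bar> * S < 1
    \<and> \<bar>2 * (V t - (t - rho) * V' t) / (V t)\<^sup>2\<bar> < \<bar>2 / V rho\<bar> + 1"
proof -
  define \<phi> \<phi>' where "\<phi> t = 2 * (t - rho) / V t" and "\<phi>' t = 2 * (V t - (t - rho) * V' t) / (V t)\<^sup>2" for t
  have "isCont V rho" using V_deriv by (rule DERIV_isCont)
  then have "isCont \<phi> rho" "isCont \<phi>' rho"
    unfolding \<phi>_def[abs_def] \<phi>'_def[abs_def] using \<open>isCont V' rho\<close> \<open>V rho \<noteq> 0\<close>
    by (auto intro!: continuous_intros)
  then have "(V \<longlongrightarrow> V rho) (at_right rho)" "(\<phi> \<longlongrightarrow> 0) (at_right rho)" "(\<phi>' \<longlongrightarrow> 2 / V rho) (at_right rho)"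
    using \<open>isCont V rho\<close> \<open>V rho \<noteq> 0\<close> unfolding isCont_def
    by (auto simp: \<phi>_def \<phi>'_def power2_eq_square intro: tendsto_within_subset)
  then show ?thesis
    using \<open>V rho \<noteq> 0\<close> unfolding \<phi>_def[symmetric] \<phi>'_def[symmetric]
    by (intro eventually_conj eventually_at_right_less tendsto_imp_eventually_ne order_tendstoD(2)
          tendsto_intros eventually_at_rightI[of rho "rho + 1"] tendsto_eq_intros) auto
qed

context radial_bilinear_system
begin

text \<open>The correction term cancels the 1 / (t - rho) singularity of P' (horizon_gauge_deriv), so the
  gauge has bounded logarithmic derivative near rho and is comparable to P there.\<close>

definition horizon_gauge :: "(real \<Rightarrow> real) \<Rightarrow> real \<Rightarrow> real" where
  "horizon_gauge V t = P t + 2 * (t - rho) / V t * (m * t * x t - lam * y t)"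

lemma horizon_gauge_deriv:
  assumes "rho < t" "U t = V t / (t - rho)" "(V has_real_derivative V' t) (at t)" "V t \<noteq> 0"
  shows "(horizon_gauge V has_real_derivative
      2 * (V t - (t - rho) * V' t) / (V t)\<^sup>2 * (m * t * x t - lam * y t) + 2 * (t - rho) / V t * (m * x t))
    (at t)"
proof -
  define X Y Z where "X = (- 2 * U t * y t + lam * P t) / (t - rho)"
    and "Y = (2 * U t * x t + m * t * P t) / (t - rho)" and "Z = 4 * (m * t * y t + lam * x t) / (t - rho)"
  define \<phi> \<phi>' where "\<phi> = 2 * (t - rho) / V t" and "\<phi>' = 2 * (V t - (t - rho) * V' t) / (V t)\<^sup>2"
  have "t - rho \<noteq> 0" using \<open>rho < t\<close> by simp
  have dL: "((\<lambda>s. m * s * x s - lam * y s) has_real_derivative m * x t + (m * t * X - lam * Y)) (at t)"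
    using x_deriv[OF \<open>rho < t\<close>] y_deriv[OF \<open>rho < t\<close>] unfolding X_def[symmetric] Y_def[symmetric]
    by (auto intro!: derivative_eq_intros)
  have d\<phi>: "((\<lambda>s. 2 * (s - rho) / V s) has_real_derivative \<phi>') (at t)"
    unfolding \<phi>'_def using assms(3,4) by (auto intro!: derivative_eq_intros simp: field_simps power2_eq_square)
  have "(horizon_gauge V has_real_derivative Z + (\<phi> * (m * x t + (m * t * X - lam * Y)) + \<phi>' * (m * t * x t - lam * y t))) (at t)"
    unfolding horizon_gauge_def[abs_def] \<phi>_def Z_def
    by (rule DERIV_add[OF P_deriv[OF \<open>rho < t\<close>] DERIV_mult'[OF d\<phi> dL]])
  moreover have "\<phi> * (m * t * X - lam * Y) = - Z"
  proof -
    define d where "d = t - rho"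
    have "d \<noteq> 0" using \<open>t - rho \<noteq> 0\<close> unfolding d_def .
    then show ?thesis
      unfolding \<phi>_def X_def Y_def Z_def assms(2) d_def[symmetric] using \<open>V t \<noteq> 0\<close>
      by (simp add: field_simps)
  qed
  ultimately show ?thesis
    unfolding \<phi>_def[symmetric] \<phi>'_def[symmetric] by (simp add: distrib_left add.commute)
qed

lemma horizon_gauge_comparable:
  assumes "rho < t" "t < rho + 1" and small: "\<bar>2 * (t - rho) / V t\<bar> * (m * (rho + 1) + \<bar>lam\<bar>) \<le> 1"
  shows "P t \<le> 2 * horizon_gauge V t" "2 * horizon_gauge V t \<le> 3 * P t"
proof -
  define \<phi> L where "\<phi> = 2 * (t - rho) / V t" and "L = m * t * x t - lam * y t"
  have "\<bar>L\<bar> \<le> (m * t + \<bar>lam\<bar>) * (P t / 2)"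
    unfolding L_def using abs_lincomb_le[of "m * t" t "- lam"] assms(1) mass_pos rho_pos
    by (simp add: abs_mult)
  also have "\<dots> \<le> (m * (rho + 1) + \<bar>lam\<bar>) * (P t / 2)"
    using assms(2) mass_pos P_nonneg[of t] by (intro mult_right_mono add_right_mono mult_left_mono) simp_all
  finally have "\<bar>\<phi>\<bar> * \<bar>L\<bar> \<le> \<bar>\<phi>\<bar> * ((m * (rho + 1) + \<bar>lam\<bar>) * (P t / 2))"
    by (rule mult_left_mono) simp
  also have "\<dots> \<le> 1 * (P t / 2)"
    unfolding mult.assoc[symmetric] \<phi>_def by (rule mult_right_mono[OF small]) (use P_nonneg[of t] in simp)
  finally have g: "\<bar>\<phi> * L\<bar> \<le> P t / 2"
    by (simp add: abs_mult)
  have "horizon_gauge V t = P t + \<phi> * L"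
    unfolding horizon_gauge_def \<phi>_def L_def ..
  then show "P t \<le> 2 * horizon_gauge V t" "2 * horizon_gauge V t \<le> 3 * P t"
    using abs_le_D1[OF g] abs_le_D2[OF g] by linarith+
qed

lemma horizon_gauge_deriv_bound:
  assumes "rho < t" "t < rho + 1"
    and small: "\<bar>2 * (t - rho) / V t\<bar> * (m * (rho + 1) + \<bar>lam\<bar>) \<le> 1"
    and D: "\<bar>2 * (V t - (t - rho) * V' t) / (V t)\<^sup>2\<bar> \<le> D"
  shows "\<bar>2 * (V t - (t - rho) * V' t) / (V t)\<^sup>2 * (m * t * x t - lam * y t) + 2 * (t - rho) / V t * (m * x t)\<bar>
    \<le> (D * (m * (rho + 1) + \<bar>lam\<bar>) + m / (m * (rho + 1) + \<bar>lam\<bar>)) * (P t / 2)"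
proof -
  define S \<phi> \<phi>' L where "S = m * (rho + 1) + \<bar>lam\<bar>" and "\<phi> = 2 * (t - rho) / V t"
    and "\<phi>' = 2 * (V t - (t - rho) * V' t) / (V t)\<^sup>2" and "L = m * t * x t - lam * y t"
  have "0 < S" unfolding S_def using mass_pos rho_pos by (simp add: add_pos_nonneg)
  have "\<bar>L\<bar> \<le> (m * t + \<bar>lam\<bar>) * (P t / 2)"
    unfolding L_def using abs_lincomb_le[of "m * t" t "- lam"] assms(1) mass_pos rho_pos
    by (simp add: abs_mult)
  also have "\<dots> \<le> S * (P t / 2)"
    unfolding S_def using assms(2) mass_pos P_nonneg[of t]
    by (intro mult_right_mono add_right_mono mult_left_mono) simp_all
  moreover have "0 \<le> D" using D by (meson abs_ge_zero order_trans)
  ultimately have "\<bar>\<phi>'\<bar> * \<bar>L\<bar> \<le> D * (S * (P t / 2))"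
    using D unfolding \<phi>'_def by (intro mult_mono) simp_all
  moreover have "\<bar>\<phi>\<bar> * \<bar>m * x t\<bar> \<le> 1 / S * (m * (P t / 2))"
  proof (rule mult_mono)
    show "\<bar>\<phi>\<bar> \<le> 1 / S" using small \<open>0 < S\<close> unfolding \<phi>_def S_def by (simp add: field_simps)
    show "\<bar>m * x t\<bar> \<le> m * (P t / 2)" using abs_lincomb_le[of m t 0] mass_pos by simp
  qed (use \<open>0 < S\<close> in simp_all)
  moreover have "\<bar>\<phi>' * L + \<phi> * (m * x t)\<bar> \<le> \<bar>\<phi>'\<bar> * \<bar>L\<bar> + \<bar>\<phi>\<bar> * \<bar>m * x t\<bar>"
    unfolding abs_mult[symmetric] by (rule abs_triangle_ineq)
  ultimately have "\<bar>\<phi>' * L + \<phi> * (m * x t)\<bar> \<le> D * (S * (P t / 2)) + 1 / S * (m * (P t / 2))"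
    by linarith
  also have "\<dots> = (D * S + m / S) * (P t / 2)"
    by (simp add: algebra_simps)
  finally show ?thesis unfolding S_def \<phi>_def \<phi>'_def L_def .
qed

lemma P_bounded_below_at_horizon:
  assumes U_eq: "\<And>t. rho < t \<Longrightarrow> U t = V t / (t - rho)"
    and V_deriv: "\<And>t. (V has_real_derivative V' t) (at t)"
    and "isCont V' rho" "V rho \<noteq> 0"
    and P_pos: "\<And>t. rho < t \<Longrightarrow> 0 < P t"
  shows "\<exists>c>0. \<forall>\<^sub>F t in at_right rho. c \<le> P t"
proof -
  define S D where "S = m * (rho + 1) + \<bar>lam\<bar>" and "D = \<bar>2 / V rho\<bar> + 1"
  define G' where "G' t = 2 * (V t - (t - rho) * V' t) / (V t)\<^sup>2 * (m * t * x t - lam * y t)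
    + 2 * (t - rho) / V t * (m * x t)" for t
  have "0 < S" unfolding S_def using mass_pos rho_pos by (simp add: add_pos_nonneg)
  have near: "\<forall>\<^sub>F t in at_right rho. (horizon_gauge V has_real_derivative G' t) (at t) \<and>
      \<bar>G' t\<bar> \<le> (D * S + m / S) * horizon_gauge V t \<and> 0 < horizon_gauge V t \<and> 2 * horizon_gauge V t \<le> 3 * P t"
    using horizon_eventually_small[OF V_deriv \<open>isCont V' rho\<close> \<open>V rho \<noteq> 0\<close>, of S]
  proof eventually_elim
    case (elim t)
    then have comp: "P t \<le> 2 * horizon_gauge V t" "2 * horizon_gauge V t \<le> 3 * P t"
      using horizon_gauge_comparable[of t V] unfolding S_def by auto
    have "\<bar>G' t\<bar> \<le> (D * S + m / S) * (P t / 2)"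
      using elim horizon_gauge_deriv_bound[of t V V' D] unfolding G'_def S_def D_def by auto
    also have "\<dots> \<le> (D * S + m / S) * horizon_gauge V t"
      using comp \<open>0 < S\<close> mass_pos unfolding D_def by (intro mult_left_mono) auto
    finally show ?case
      using elim comp P_pos[of t] horizon_gauge_deriv[of t V V'] U_eq V_deriv unfolding G'_def by auto
  qed
  then have "\<forall>\<^sub>F t in at_right rho. (horizon_gauge V has_real_derivative G' t) (at t) \<and>
      \<bar>G' t\<bar> \<le> (D * S + m / S) * horizon_gauge V t \<and> 0 < horizon_gauge V t"
    by (rule eventually_mono) auto
  then obtain c where "0 < c" and c: "\<forall>\<^sub>F t in at_right rho. c \<le> horizon_gauge V t"
    using eventually_ge_const_at_right_of_log_deriv_bounded by blast
  from near c have "\<forall>\<^sub>F t in at_right rho. 2 * c / 3 \<le> P t"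
    by eventually_elim auto
  then show ?thesis using \<open>0 < c\<close> by (intro exI[of _ "2 * c / 3"]) auto
qed

lemma weighted_P_not_integrable_at_horizon:
  assumes "0 < c" "\<forall>\<^sub>F t in at_right rho. c \<le> P t"
  shows "\<not> (\<lambda>t. P t * (t\<^sup>2 + a\<^sup>2) / (t - rho)\<^sup>2) integrable_on {rho<..}"
proof (rule not_integrable_greaterThan_of_ge_inverse_square_at_right)
  show "0 < c * rho\<^sup>2" using assms(1) rho_pos by simp
  show "\<forall>\<^sub>F t in at_right rho. c * rho\<^sup>2 / (t - rho)\<^sup>2 \<le> P t * (t\<^sup>2 + a\<^sup>2) / (t - rho)\<^sup>2"
    using assms(2) eventually_at_right_less[of rho]
  proof eventually_elim
    case (elim t)
    have "rho\<^sup>2 \<le> t\<^sup>2 + a\<^sup>2" using elim rho_pos by (simp add: add_increasing2 power_mono)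
    then have "c * rho\<^sup>2 \<le> P t * (t\<^sup>2 + a\<^sup>2)" using elim assms(1) by (intro mult_mono) auto
    then show ?case by (simp add: divide_right_mono)
  qed
qed (use weighted_P_continuous P_nonneg in auto)

end

section \<open>Lower bound at infinity\<close>

lemma weight_gap:
  fixes m lam rho t :: real
  assumes "0 < m" "0 < rho" "rho < t" "lam\<^sup>2 \<le> m\<^sup>2 * rho * t" "2 * \<bar>lam\<bar> \<le> m\<^sup>2 * rho * t"
  shows "m ^ 3 * rho * t\<^sup>2 / 2
    \<le> 2 * m * (t + rho) * (m\<^sup>2 * t\<^sup>2 + lam\<^sup>2) + m * lam * (t - rho) - 2 * sqrt (m\<^sup>2 * t\<^sup>2 + lam\<^sup>2) ^ 3"
proof -
  define S where "S = sqrt (m\<^sup>2 * t\<^sup>2 + lam\<^sup>2)"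
  have S2: "S\<^sup>2 = m\<^sup>2 * t\<^sup>2 + lam\<^sup>2" unfolding S_def by simp
  have "(m * t + m * rho / 2)\<^sup>2 = S\<^sup>2 + (m\<^sup>2 * rho * t - lam\<^sup>2) + (m * rho)\<^sup>2 / 4"
    unfolding S2 by (simp add: power2_eq_square algebra_simps)
  then have "S\<^sup>2 \<le> (m * t + m * rho / 2)\<^sup>2"
    using assms(4) zero_le_power2[of "m * rho"] by linarith
  then have "S \<le> m * t + m * rho / 2"
    by (rule power2_le_imp_le) (use assms(1-3) in auto)
  then have "2 * S\<^sup>2 * (m * rho / 2) \<le> 2 * S\<^sup>2 * (m * (t + rho) - S)"
    by (intro mult_left_mono) (auto simp: algebra_simps)
  moreover have "m ^ 3 * rho * t\<^sup>2 \<le> 2 * S\<^sup>2 * (m * rho / 2)"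
  proof -
    have "m\<^sup>2 * t\<^sup>2 * (m * rho) \<le> S\<^sup>2 * (m * rho)"
      unfolding S2 using assms(1,2) by (intro mult_right_mono) auto
    then show ?thesis by (simp add: power2_eq_square power3_eq_cube algebra_simps)
  qed
  moreover have "m * \<bar>lam\<bar> * t \<le> m ^ 3 * rho * t\<^sup>2 / 2"
    using mult_left_mono[OF assms(5), of "m * t"] assms(1-3)
    by (simp add: power2_eq_square power3_eq_cube algebra_simps)
  moreover have "- (m * \<bar>lam\<bar> * t) \<le> m * lam * (t - rho)"
  proof -
    have "\<bar>m * lam\<bar> * \<bar>t - rho\<bar> \<le> \<bar>m * lam\<bar> * t"
      using assms(2,3) by (intro mult_left_mono) auto
    then have "\<bar>m * lam * (t - rho)\<bar> \<le> m * \<bar>lam\<bar> * t"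
      using assms(1) by (simp add: abs_mult)
    then show ?thesis by linarith
  qed
  moreover have "2 * m * (t + rho) * S\<^sup>2 + m * lam * (t - rho) - 2 * S ^ 3
      = 2 * S\<^sup>2 * (m * (t + rho) - S) + m * lam * (t - rho)"
    by (simp add: power2_eq_square power3_eq_cube algebra_simps)
  ultimately have "m ^ 3 * rho * t\<^sup>2 / 2 \<le> 2 * m * (t + rho) * S\<^sup>2 + m * lam * (t - rho) - 2 * S ^ 3"
    by linarith
  then show ?thesis using S2 unfolding S_def by simp
qed

lemma weight_ratio_lower_bound:
  fixes m lam w rho :: real
  assumes "0 < m" "m \<le> w" "0 < rho"
  defines "S \<equiv> \<lambda>t. sqrt (m\<^sup>2 * t\<^sup>2 + lam\<^sup>2)"
    and "W \<equiv> \<lambda>t. 2 * w * (t + rho) * (m\<^sup>2 * t\<^sup>2 + lam\<^sup>2) + m * lam * (t - rho)"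
  shows "\<forall>\<^sub>F t in at_top. 2 * S t ^ 3 < W t \<and> rho / (6 * t) \<le> (W t - 2 * S t ^ 3) / W t"
proof -
  define Wm where "Wm t = 2 * m * (t + rho) * (m\<^sup>2 * t\<^sup>2 + lam\<^sup>2) + m * lam * (t - rho)" for t
  have "\<forall>\<^sub>F t in at_top. rho < t \<and> lam\<^sup>2 \<le> m\<^sup>2 * rho * t \<and> 2 * \<bar>lam\<bar> \<le> m\<^sup>2 * rho * t
      \<and> Wm t \<le> 3 * m ^ 3 * t ^ 3"
    unfolding Wm_def using assms(1,3)
    by (intro eventually_conj; real_asymp simp: power3_eq_cube power2_eq_square)
  then show ?thesis
  proof eventually_elim
    case (elim t)
    then have gap: "m ^ 3 * rho * t\<^sup>2 / 2 \<le> Wm t - 2 * S t ^ 3"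
      using weight_gap[of m rho t lam] assms(1,3) unfolding Wm_def S_def by auto
    have "0 < m ^ 3 * rho * t\<^sup>2 / 2" using elim assms(1,3) by simp
    have "0 < S t ^ 3" unfolding S_def using elim assms(1,3) by (simp add: add_pos_nonneg)
    have "0 < Wm t" using gap \<open>0 < m ^ 3 * rho * t\<^sup>2 / 2\<close> \<open>0 < S t ^ 3\<close> by linarith
    have "Wm t \<le> W t"
      unfolding Wm_def W_def using elim assms by (intro add_right_mono mult_right_mono) auto
    have "rho / (6 * t) = (m ^ 3 * rho * t\<^sup>2 / 2) / (3 * m ^ 3 * t ^ 3)"
      using elim assms(1,3) by (simp add: power2_eq_square power3_eq_cube field_simps)
    also have "\<dots> \<le> (Wm t - 2 * S t ^ 3) / Wm t"
      using gap elim \<open>0 < m ^ 3 * rho * t\<^sup>2 / 2\<close> \<open>0 < Wm t\<close> by (intro frac_le) auto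
    also have "\<dots> = 1 - 2 * S t ^ 3 / Wm t"
      using \<open>0 < Wm t\<close> by (simp add: diff_divide_distrib)
    also have "\<dots> \<le> 1 - 2 * S t ^ 3 / W t"
      using \<open>0 < Wm t\<close> \<open>Wm t \<le> W t\<close> \<open>0 < S t ^ 3\<close> by (simp add: frac_le)
    also have "\<dots> = (W t - 2 * S t ^ 3) / W t"
      using \<open>0 < Wm t\<close> \<open>Wm t \<le> W t\<close> by (simp add: diff_divide_distrib)
    finally show ?case using gap \<open>0 < m ^ 3 * rho * t\<^sup>2 / 2\<close> \<open>Wm t \<le> W t\<close> by auto
  qed
qed

lemma weight_quotient_deriv:
  fixes m lam w rho t :: real
  defines "S \<equiv> \<lambda>t. sqrt (m\<^sup>2 * t\<^sup>2 + lam\<^sup>2)"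
    and "W \<equiv> \<lambda>t. 2 * w * (t + rho) * (m\<^sup>2 * t\<^sup>2 + lam\<^sup>2) + m * lam * (t - rho)"
  assumes "0 < m" "0 < t" "W t - 2 * S t ^ 3 \<noteq> 0"
  shows "((\<lambda>t. W t / (W t - 2 * S t ^ 3)) has_real_derivative
    2 * S t * (2 * w * (m\<^sup>2 * t\<^sup>2 + lam\<^sup>2) * (m\<^sup>2 * t * rho - lam\<^sup>2) + m * lam * (2 * m\<^sup>2 * t\<^sup>2 - 3 * m\<^sup>2 * t * rho - lam\<^sup>2))
      / (W t - 2 * S t ^ 3)\<^sup>2) (at t)"
proof -
  define W' where "W' = 2 * w * ((m\<^sup>2 * t\<^sup>2 + lam\<^sup>2) + (t + rho) * (2 * m\<^sup>2 * t)) + m * lam"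
  have "0 < m\<^sup>2 * t\<^sup>2 + lam\<^sup>2" using assms(3,4) by (simp add: add_pos_nonneg)
  then have "0 < S t" and S2: "(S t)\<^sup>2 = m\<^sup>2 * t\<^sup>2 + lam\<^sup>2" unfolding S_def by simp_all
  have "(S has_real_derivative m\<^sup>2 * t / S t) (at t)"
    unfolding S_def using \<open>0 < m\<^sup>2 * t\<^sup>2 + lam\<^sup>2\<close>
    by (auto intro!: derivative_eq_intros simp: field_simps power2_eq_square)
  from DERIV_power[OF this, of 3]
  have dS: "((\<lambda>t. S t ^ 3) has_real_derivative 3 * S t * m\<^sup>2 * t) (at t)"
    using \<open>0 < S t\<close> by (simp add: power2_eq_square field_simps)
  have dW: "(W has_real_derivative W') (at t)"
    unfolding W_def W'_def by (auto intro!: derivative_eq_intros simp: algebra_simps power2_eq_square)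
  have "((\<lambda>t. W t / (W t - 2 * S t ^ 3)) has_real_derivative
      (W' * (W t - 2 * S t ^ 3) - W t * (W' - 2 * (3 * S t * m\<^sup>2 * t))) / (W t - 2 * S t ^ 3)\<^sup>2) (at t)"
    using DERIV_divide[OF dW DERIV_diff[OF dW DERIV_cmult[OF dS, of 2]]] assms(5)
    by (simp add: power2_eq_square)
  moreover have "W' * (W t - 2 * S t ^ 3) - W t * (W' - 2 * (3 * S t * m\<^sup>2 * t))
      = 2 * S t * (3 * m\<^sup>2 * t * W t - (S t)\<^sup>2 * W')"
    by (simp add: algebra_simps power3_eq_cube power2_eq_square)
  moreover have "3 * m\<^sup>2 * t * W t - (S t)\<^sup>2 * W'
      = 2 * w * (m\<^sup>2 * t\<^sup>2 + lam\<^sup>2) * (m\<^sup>2 * t * rho - lam\<^sup>2) + m * lam * (2 * m\<^sup>2 * t\<^sup>2 - 3 * m\<^sup>2 * t * rho - lam\<^sup>2)"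
    unfolding S2 W_def W'_def by (simp add: algebra_simps power2_eq_square)
  ultimately show ?thesis by simp
qed

lemma affine_interpolation_bounds:
  fixes b p l :: real
  assumes "1 \<le> b" "\<bar>l\<bar> \<le> p"
  shows "p \<le> b * (p - l) + l" "b * (p - l) + l \<le> 2 * b * p"
proof -
  have "0 \<le> (b - 1) * (p - l)" using assms by simp
  then show "p \<le> b * (p - l) + l" by (simp add: algebra_simps)
  have "(b - 1) * (p - l) \<le> (b - 1) * (2 * p)" using assms by (intro mult_left_mono) auto
  then show "b * (p - l) + l \<le> 2 * b * p" using assms by (simp add: algebra_simps)
qed

context radial_bilinear_system
begin

lemma normalized_lincomb_deriv:
  assumes "rho < t" "U t = - w * (t + rho)"
  defines "S \<equiv> \<lambda>t. sqrt (m\<^sup>2 * t\<^sup>2 + lam\<^sup>2)"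
  shows "((\<lambda>s. 2 * (m * s * x s - lam * y s) / S s) has_real_derivative
    2 * (2 * w * (t + rho) * (m\<^sup>2 * t\<^sup>2 + lam\<^sup>2) + m * lam * (t - rho)) * (m * t * y t + lam * x t)
      / (S t ^ 3 * (t - rho))) (at t)"
proof -
  have "0 < m\<^sup>2 * t\<^sup>2 + lam\<^sup>2" using assms(1) mass_pos rho_pos by (simp add: add_pos_nonneg)
  then have "0 < S t" and S2: "(S t)\<^sup>2 = m\<^sup>2 * t\<^sup>2 + lam\<^sup>2" unfolding S_def by simp_all
  have dS: "(S has_real_derivative m\<^sup>2 * t / S t) (at t)"
    unfolding S_def using \<open>0 < m\<^sup>2 * t\<^sup>2 + lam\<^sup>2\<close>
    by (auto intro!: derivative_eq_intros simp: field_simps power2_eq_square)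
  define X Y where "X = (2 * w * (t + rho) * y t + lam * P t) / (t - rho)"
    and "Y = (- 2 * w * (t + rho) * x t + m * t * P t) / (t - rho)"
  have dL: "((\<lambda>s. 2 * (m * s * x s - lam * y s)) has_real_derivative 2 * (m * x t + m * t * X - lam * Y)) (at t)"
    using x_deriv[OF assms(1)] y_deriv[OF assms(1)] unfolding X_def Y_def assms(2)
    by (auto intro!: derivative_eq_intros simp: algebra_simps)
  have "m * t * X - lam * Y = 2 * w * (t + rho) * (m * t * y t + lam * x t) / (t - rho)"
  proof -
    define d where "d = t - rho"
    have "d \<noteq> 0" unfolding d_def using assms(1) by simp
    then show ?thesis unfolding X_def Y_def d_def[symmetric] by (simp add: field_simps)
  qed
  have "(2 * (m * x t + m * t * X - lam * Y) * S t - 2 * (m * t * x t - lam * y t) * (m\<^sup>2 * t / S t)) / (S t * S t)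
      = (2 * m * x t * (S t)\<^sup>2 + 2 * (S t)\<^sup>2 * (m * t * X - lam * Y) - 2 * (m * t * x t - lam * y t) * (m\<^sup>2 * t))
        / S t ^ 3"
    using \<open>0 < S t\<close> by (simp add: field_simps power2_eq_square power3_eq_cube)
  also have "\<dots> = (2 * m * lam * (m * t * y t + lam * x t)
      + 2 * (S t)\<^sup>2 * (2 * w * (t + rho) * (m * t * y t + lam * x t) / (t - rho))) / S t ^ 3"
    unfolding \<open>m * t * X - lam * Y = _\<close> S2 by (simp add: algebra_simps power2_eq_square)
  also have "\<dots> = 2 * (2 * w * (t + rho) * (m\<^sup>2 * t\<^sup>2 + lam\<^sup>2) + m * lam * (t - rho)) * (m * t * y t + lam * x t)
      / (S t ^ 3 * (t - rho))"
    using \<open>0 < S t\<close> assms(1) by (simp add: S2 field_simps)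
  finally show ?thesis
    using DERIV_divide[OF dL dS] \<open>0 < S t\<close> by simp
qed

lemma abs_normalized_lincomb_le:
  assumes "0 < t"
  shows "\<bar>2 * (m * t * x t - lam * y t) / sqrt (m\<^sup>2 * t\<^sup>2 + lam\<^sup>2)\<bar> \<le> P t"
proof -
  define L S where "L = m * t * x t - lam * y t" and "S = sqrt (m\<^sup>2 * t\<^sup>2 + lam\<^sup>2)"
  have "0 < S" unfolding S_def using assms mass_pos by (simp add: add_pos_nonneg)
  have "\<bar>L\<bar> \<le> S * (P t / 2)"
    unfolding L_def S_def using abs_lincomb_le_sqrt[of "m * t" t "- lam"] by (simp add: power_mult_distrib)
  then have "2 * \<bar>L\<bar> / S \<le> 2 * (S * (P t / 2)) / S"
    using \<open>0 < S\<close> by (intro divide_right_mono mult_left_mono) auto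
  then show ?thesis
    unfolding L_def[symmetric] S_def[symmetric] using \<open>0 < S\<close> by (simp add: abs_divide abs_mult)
qed

lemma infinity_gauge_deriv:
  fixes w t :: real
  defines "S \<equiv> \<lambda>t. sqrt (m\<^sup>2 * t\<^sup>2 + lam\<^sup>2)"
    and "W \<equiv> \<lambda>t. 2 * w * (t + rho) * (m\<^sup>2 * t\<^sup>2 + lam\<^sup>2) + m * lam * (t - rho)"
    and "\<Lambda> \<equiv> \<lambda>t. 2 * (m * t * x t - lam * y t) / sqrt (m\<^sup>2 * t\<^sup>2 + lam\<^sup>2)"
  assumes "rho < t" "U t = - w * (t + rho)" "W t - 2 * S t ^ 3 \<noteq> 0"
  shows "((\<lambda>t. W t / (W t - 2 * S t ^ 3) * (P t - \<Lambda> t) + \<Lambda> t) has_real_derivative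
    2 * S t * (2 * w * (m\<^sup>2 * t\<^sup>2 + lam\<^sup>2) * (m\<^sup>2 * t * rho - lam\<^sup>2) + m * lam * (2 * m\<^sup>2 * t\<^sup>2 - 3 * m\<^sup>2 * t * rho - lam\<^sup>2))
      / (W t - 2 * S t ^ 3)\<^sup>2 * (P t - \<Lambda> t)) (at t)"
proof -
  define K where "K = (m * t * y t + lam * x t) / (t - rho)"
  define B where "B = (\<lambda>t. W t / (W t - 2 * S t ^ 3))"
  define B' where "B' = 2 * S t * (2 * w * (m\<^sup>2 * t\<^sup>2 + lam\<^sup>2) * (m\<^sup>2 * t * rho - lam\<^sup>2)
    + m * lam * (2 * m\<^sup>2 * t\<^sup>2 - 3 * m\<^sup>2 * t * rho - lam\<^sup>2)) / (W t - 2 * S t ^ 3)\<^sup>2"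
  have "0 < t" using assms(4) rho_pos by simp
  have "0 < S t" unfolding S_def using \<open>0 < t\<close> mass_pos by (simp add: add_pos_nonneg)
  have dB: "(B has_real_derivative B') (at t)"
    using weight_quotient_deriv[OF mass_pos \<open>0 < t\<close>, of w rho lam] assms(6)
    unfolding B_def B'_def S_def W_def by simp
  have d\<Lambda>: "(\<Lambda> has_real_derivative 2 * W t * K / S t ^ 3) (at t)"
    using normalized_lincomb_deriv[OF assms(4,5)] unfolding \<Lambda>_def S_def W_def K_def
    by (simp add: field_simps)
  have dP: "(P has_real_derivative 4 * K) (at t)"
    using P_deriv[OF assms(4)] unfolding K_def by simp
  have "((\<lambda>t. B t * (P t - \<Lambda> t) + \<Lambda> t) has_real_derivative
      B t * (4 * K - 2 * W t * K / S t ^ 3) + B' * (P t - \<Lambda> t) + 2 * W t * K / S t ^ 3) (at t)"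
    by (rule DERIV_add[OF DERIV_mult'[OF dB DERIV_diff[OF dP d\<Lambda>]] d\<Lambda>])
  moreover have "B t * (4 * K - 2 * W t * K / S t ^ 3) = - (2 * W t * K / S t ^ 3)"
  proof -
    define q where "q = S t ^ 3"
    have "q \<noteq> 0" "W t - 2 * q \<noteq> 0" unfolding q_def using \<open>0 < S t\<close> assms(6) by simp_all
    then have "B t * (4 * K - 2 * W t * K / q) = W t / (W t - 2 * q) * (W t - 2 * q) * (- 2 * K / q)"
      unfolding B_def q_def[symmetric] by (simp add: field_simps)
    also have "\<dots> = - (2 * W t * K / q)" using \<open>W t - 2 * q \<noteq> 0\<close> by simp
    finally show ?thesis unfolding q_def .
  qed
  ultimately show ?thesis unfolding B_def B'_def by simp
qed

text \<open>With B = W / (W - 2 S^3) the gauge G = B (P - Lam) + Lam is chosen so that the singular terms of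
  P' and Lam' cancel in G', leaving B' (P - Lam) >= 0, while G <= 2 B P and B <= 6 t / rho.\<close>

lemma P_ge_inverse_at_top_neg:
  assumes "m \<le> w" and U_eq: "\<And>t. rho < t \<Longrightarrow> U t = - w * (t + rho)"
    and P_pos: "\<And>t. rho < t \<Longrightarrow> 0 < P t"
  shows "\<exists>c>0. \<forall>\<^sub>F t in at_top. c / t \<le> P t"
proof -
  define S W \<Lambda> B where "S t = sqrt (m\<^sup>2 * t\<^sup>2 + lam\<^sup>2)"
    and "W t = 2 * w * (t + rho) * (m\<^sup>2 * t\<^sup>2 + lam\<^sup>2) + m * lam * (t - rho)"
    and "\<Lambda> t = 2 * (m * t * x t - lam * y t) / S t" and "B t = W t / (W t - 2 * S t ^ 3)" for t
  define G where "G t = B t * (P t - \<Lambda> t) + \<Lambda> t" for t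
  define E where "E t = 2 * w * (m\<^sup>2 * t\<^sup>2 + lam\<^sup>2) * (m\<^sup>2 * t * rho - lam\<^sup>2)
    + m * lam * (2 * m\<^sup>2 * t\<^sup>2 - 3 * m\<^sup>2 * t * rho - lam\<^sup>2)" for t
  have "\<forall>\<^sub>F t in at_top. rho < t \<and> 2 * S t ^ 3 < W t \<and> rho / (6 * t) \<le> (W t - 2 * S t ^ 3) / W t \<and>
      0 \<le> E t"
    using weight_ratio_lower_bound[OF mass_pos \<open>m \<le> w\<close> rho_pos, of lam] mass_pos rho_pos \<open>m \<le> w\<close>
    unfolding S_def W_def E_def
    by (intro eventually_conj eventually_gt_at_top) (auto elim: eventually_mono, real_asymp)
  then obtain R where R: "\<And>t. R \<le> t \<Longrightarrow> rho < t \<and> 2 * S t ^ 3 < W t \<and> rho / (6 * t) \<le> (W t - 2 * S t ^ 3) / W t \<and>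
      0 \<le> E t"
    unfolding eventually_at_top_linorder by blast
  have bounds: "1 \<le> B t" "\<bar>\<Lambda> t\<bar> \<le> P t" if "R \<le> t" for t
    using R[OF that] rho_pos abs_normalized_lincomb_le[of t] unfolding B_def \<Lambda>_def S_def
    by (auto simp: field_simps)
  have mono: "G R \<le> G t" if "R \<le> t" for t
  proof (rule DERIV_nonneg_imp_nondecreasing[OF that])
    fix s assume "R \<le> s" "s \<le> t"
    have "(G has_real_derivative 2 * S s * E s / (W s - 2 * S s ^ 3)\<^sup>2 * (P s - \<Lambda> s)) (at s)"
      using infinity_gauge_deriv[of s w] U_eq R[OF \<open>R \<le> s\<close>]
      unfolding G_def[abs_def] B_def[abs_def] S_def[abs_def] W_def[abs_def] \<Lambda>_def[abs_def] E_def
      by simp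
    moreover have "0 \<le> 2 * S s * E s / (W s - 2 * S s ^ 3)\<^sup>2 * (P s - \<Lambda> s)"
      using R[OF \<open>R \<le> s\<close>] abs_le_D1[of "\<Lambda> s" "P s"] bounds[OF \<open>R \<le> s\<close>] unfolding S_def
      by (intro mult_nonneg_nonneg divide_nonneg_nonneg) auto
    ultimately show "\<exists>y. (G has_real_derivative y) (at s) \<and> 0 \<le> y" by blast
  qed
  have "0 < P R" using P_pos R[OF order_refl] by blast
  have lower: "P R * rho / 12 / t \<le> P t" if "R \<le> t" for t
  proof -
    have "0 < t" "0 < B t" using R[OF that] rho_pos bounds[OF that] by auto
    have "rho / (6 * t) \<le> 1 / B t" using R[OF that] unfolding B_def by simp
    then have "B t \<le> 6 * t / rho" using \<open>0 < t\<close> \<open>0 < B t\<close> rho_pos by (simp add: field_simps)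
    have "P R \<le> G t"
      using affine_interpolation_bounds(1)[OF bounds[OF order_refl]] mono[OF that] unfolding G_def by linarith
    also have "\<dots> \<le> 2 * B t * P t"
      using affine_interpolation_bounds(2)[OF bounds[OF that]] unfolding G_def .
    also have "\<dots> \<le> 2 * (6 * t / rho) * P t"
      using \<open>B t \<le> 6 * t / rho\<close> P_nonneg[of t] by (intro mult_right_mono) auto
    finally show ?thesis using \<open>0 < t\<close> rho_pos by (simp add: field_simps)
  qed
  have "\<forall>\<^sub>F t in at_top. P R * rho / 12 / t \<le> P t"
    using eventually_ge_at_top[of R] by eventually_elim (rule lower)
  then show ?thesis using \<open>0 < P R\<close> rho_pos by (intro exI[of _ "P R * rho / 12"]) auto
qed

lemma P_ge_inverse_at_top:
  assumes "m \<le> \<bar>\<omega>\<bar>" and U_eq: "\<And>t. rho < t \<Longrightarrow> U t = \<omega> * (t + rho)"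
    and P_pos: "\<And>t. rho < t \<Longrightarrow> 0 < P t"
  shows "\<exists>c>0. \<forall>\<^sub>F t in at_top. c / t \<le> P t"
proof (cases "\<omega> < 0")
  case True
  then show ?thesis using P_ge_inverse_at_top_neg[of "- \<omega>"] assms by simp
next
  case False
  interpret reflected: radial_bilinear_system m "- lam" rho "\<lambda>t. - U t" "\<lambda>t. - x t" y P
    by (rule reflection)
  show ?thesis using reflected.P_ge_inverse_at_top_neg[of \<omega>] assms False by simp
qed

lemma weighted_P_not_integrable_at_top:
  assumes "0 < c" "\<forall>\<^sub>F t in at_top. c / t \<le> P t"
  shows "\<not> (\<lambda>t. P t * (t\<^sup>2 + a\<^sup>2) / (t - rho)\<^sup>2) integrable_on {rho<..}"
proof (rule not_integrable_greaterThan_of_ge_inverse_at_top)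
  show "\<forall>\<^sub>F t in at_top. c / t \<le> P t * (t\<^sup>2 + a\<^sup>2) / (t - rho)\<^sup>2"
    using assms(2) eventually_gt_at_top[of rho]
  proof eventually_elim
    case (elim t)
    have "rho * rho \<le> 2 * t * rho" using elim rho_pos by (intro mult_right_mono) auto
    then have "(t - rho)\<^sup>2 \<le> t\<^sup>2 + a\<^sup>2"
      by (simp add: power2_eq_square algebra_simps add_increasing)
    then have "P t * (t - rho)\<^sup>2 \<le> P t * (t\<^sup>2 + a\<^sup>2)" using P_nonneg[of t] by (rule mult_left_mono)
    then have "P t \<le> P t * (t\<^sup>2 + a\<^sup>2) / (t - rho)\<^sup>2" using elim by (simp add: field_simps)
    then show ?case using elim by linarith
  qed
qed (use assms(1) weighted_P_continuous P_nonneg in auto)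

end

section \<open>The extreme Kerr case\<close>

lemma half_integer_abs_ge:
  assumes "half_integer k"
  shows "1 / 2 \<le> \<bar>k\<bar>"
proof -
  obtain n :: int where k: "k = real_of_int n + 1 / 2" using assms unfolding half_integer_def by blast
  have "0 \<le> real_of_int n \<or> real_of_int n \<le> - 1" by (cases "0 \<le> n") auto
  then show ?thesis unfolding k by linarith
qed

lemma extreme_Kerr_frequency_bound:
  assumes "half_integer k" "0 < M" "\<bar>a\<bar> = M" "\<omega> * (2 * M\<^sup>2) + k * a = 0"
  shows "1 \<le> 4 * M * \<bar>\<omega>\<bar>"
proof -
  have "\<omega> * (2 * M\<^sup>2) = - (k * a)" using assms(4) by linarith
  then have "\<bar>\<omega>\<bar> * (2 * M\<^sup>2) = \<bar>k\<bar> * M"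
    using assms(3) by (metis abs_minus_cancel abs_mult abs_of_nonneg zero_le_mult_iff zero_le_numeral zero_le_power2)
  moreover have "M / 2 \<le> \<bar>k\<bar> * M"
    using half_integer_abs_ge[OF assms(1)] assms(2) by simp
  moreover have "M / 2 * (4 * M * \<bar>\<omega>\<bar>) = \<bar>\<omega>\<bar> * (2 * M\<^sup>2)"
    by (simp add: power2_eq_square)
  ultimately have "M / 2 * 1 \<le> M / 2 * (4 * M * \<bar>\<omega>\<bar>)"
    by linarith
  then show ?thesis using assms(2) by (simp only: mult_le_cancel_left_pos half_gt_zero)
qed

lemma extreme_Kerr_radial_density_not_integrable:
  assumes rs: "radial_solution M a 0 m e k \<omega> lam f1 f2"
    and nontrivial: "\<exists>r\<in>{M<..}. f1 r \<noteq> 0 \<or> f2 r \<noteq> 0"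
    and "0 < M" "\<bar>a\<bar> = M" "0 < m" "half_integer k" "M * m \<le> 1 / 4"
  shows "\<not> (\<lambda>r. ((cmod (f1 r))\<^sup>2 + (cmod (f2 r))\<^sup>2) * (r\<^sup>2 + a\<^sup>2) / (r - M)\<^sup>2) integrable_on {M<..}"
proof -
  define P V where "P r = (cmod (f1 r))\<^sup>2 + (cmod (f2 r))\<^sup>2" and "V r = Vpot a 0 e k \<omega> r" for r
  interpret radial_bilinear_system m lam M "\<lambda>r. V r / (r - M)"
      "\<lambda>r. Re (cnj (f1 r) * f2 r)" "\<lambda>r. Im (cnj (f1 r) * f2 r)" P
    unfolding V_def[abs_def] P_def[abs_def] using radial_solution_bilinear_system[OF rs] assms(3,5) .
  obtain r0 where "M < r0" "f1 r0 \<noteq> 0 \<or> f2 r0 \<noteq> 0" using nontrivial by auto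
  then have "0 < P r0" unfolding P_def by (auto simp: add_pos_nonneg add_nonneg_pos)
  then have pos: "0 < P t" if "M < t" for t using P_pos \<open>M < r0\<close> that by blast
  have "a\<^sup>2 = M\<^sup>2" using assms(4) by (metis power2_abs)
  then have V: "V t = \<omega> * (t\<^sup>2 + M\<^sup>2) + k * a" for t
    unfolding V_def Vpot_def by simp
  have "\<not> (\<lambda>r. P r * (r\<^sup>2 + a\<^sup>2) / (r - M)\<^sup>2) integrable_on {M<..}"
  proof (cases "V M = 0")
    case False
    have "\<And>t. (V has_real_derivative 2 * \<omega> * t) (at t)"
      unfolding V[abs_def] by (auto intro!: derivative_eq_intros)
    then show ?thesis
      using P_bounded_below_at_horizon[of V "\<lambda>t. 2 * \<omega> * t"] weighted_P_not_integrable_at_horizon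
        False pos by (auto intro: continuous_intros)
  next
    case True
    then have "1 \<le> 4 * M * \<bar>\<omega>\<bar>"
      using extreme_Kerr_frequency_bound[OF assms(6,3)] assms(4) V[of M] by simp
    then have "M * m \<le> M * \<bar>\<omega>\<bar>" using \<open>M * m \<le> 1 / 4\<close> by linarith
    then have "m \<le> \<bar>\<omega>\<bar>" using \<open>0 < M\<close> by simp
    moreover have "V t / (t - M) = \<omega> * (t + M)" if "M < t" for t
      using True V[of t] V[of M] that by (simp add: field_simps power2_eq_square)
    ultimately show ?thesis
      using P_ge_inverse_at_top[of \<omega>] weighted_P_not_integrable_at_top pos by auto
  qed
  then show ?thesis unfolding P_def .
qed

theorem mainTheorem9:
  fixes M a Q m e k \<omega> :: real
  assumes "M > 0" and "M\<^sup>2 = a\<^sup>2 + Q\<^sup>2"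
    and "Q = 0" and "M = \<bar>a\<bar>"
    and "m > 0"
    and "half_integer k"
    and "energy_eigenvalue M a Q m e k \<omega>"
  shows "M * m > 1/4"
proof (rule ccontr)
  assume "\<not> M * m > 1/4"
  then have "M * m \<le> 1 / 4" by simp
  obtain lam f1 f2 where rs: "radial_solution M a 0 m e k \<omega> lam f1 f2"
    and nontrivial: "\<exists>r\<in>{M<..}. f1 r \<noteq> 0 \<or> f2 r \<noteq> 0"
    and "(\<lambda>r. ((cmod (f1 r))\<^sup>2 + (cmod (f2 r))\<^sup>2) * (r\<^sup>2 + a\<^sup>2) / (r - M)\<^sup>2) integrable_on {M<..}"
    using assms(3,7) unfolding energy_eigenvalue_def by blast
  with extreme_Kerr_radial_density_not_integrable[OF rs nontrivial assms(1) assms(4)[symmetric] assms(5,6)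
      \<open>M * m \<le> 1 / 4\<close>]
  show False by blast
qed

end
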